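(* Let $(X,d^\star)$ be a $\star$-metric space. If the topological space $(X,\mathscr{T}_{d^\star})$ is countably compact, then $(X,d^\star)$ is totally bounded.
   Context: A $t$-definer is a function $\star:[0,\infty)\times[0,\infty)\to[0,\infty)$ such that for all $a,b,c\ge 0$: $a\star b=b\star a$; $a\star(b\star c)=(a\star b)\star c$; if $a\le b$ then $a\star c\le b\star c$; $a\star 0=a$; and $\star$ is continuous in its first variable with respect to the Euclidean topology. Given a nonempty set $X$ and a $t$-definer $\star$, a $\star$-metric on $X$ is a function $d^\star:X\times X\to[0,\infty)$ such that for all $x,y,z\in X$: $d^\star(x,y)=0$ iff $x=y$; $d^\star(x,y)=d^\star(y,x)$; and $d^\star(x,y)\le d^\star(x,z)\star d^\star(z,y)$. Put $B_{d^\star}(a,r)=\{x\in X: d^\star(a,x)<r\}$ and let $\mathscr{T}_{d^\star}$ be the topology consisting of all $U\subseteq X$ such that for each $a\in U$ some $B_{d^\star}(a,r)$, $r>0$, is contained in $U$. A space is countably compact if every countable open cover has a finite subcover. $(X,d^\star)$ is totally bounded if for every $\epsilon>0$ there is a finite $F\subseteq X$ with $X=\bigcup_{x\in F}B_{d^\star}(x,\epsilon)$. *)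

theory Defs
  imports "HOL-Analysis.Analysis"
begin

(* A t-definer: a binary operation on [0,\<infinity>) (represented on real, relativised to {0..}). *)
definition t_definer :: "(real \<Rightarrow> real \<Rightarrow> real) \<Rightarrow> bool" where
  "t_definer st \<longleftrightarrow>
     (\<forall>a\<ge>0. \<forall>b\<ge>0. st a b \<ge> 0) \<and>
     (\<forall>a\<ge>0. \<forall>b\<ge>0. st a b = st b a) \<and>
     (\<forall>a\<ge>0. \<forall>b\<ge>0. \<forall>c\<ge>0. st a (st b c) = st (st a b) c) \<and>
     (\<forall>a\<ge>0. \<forall>b\<ge>0. \<forall>c\<ge>0. a \<le> b \<longrightarrow> st a c \<le> st b c) \<and>
     (\<forall>a\<ge>0. st a 0 = a) \<and>
     (\<forall>b\<ge>0. continuous_on {0..} (\<lambda>a. st a b))"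

definition star_metric :: "'a set \<Rightarrow> (real \<Rightarrow> real \<Rightarrow> real) \<Rightarrow> ('a \<Rightarrow> 'a \<Rightarrow> real) \<Rightarrow> bool" where
  "star_metric X st d \<longleftrightarrow>
     (\<forall>x\<in>X. \<forall>y\<in>X. d x y \<ge> 0) \<and>
     (\<forall>x\<in>X. \<forall>y\<in>X. d x y = 0 \<longleftrightarrow> x = y) \<and>
     (\<forall>x\<in>X. \<forall>y\<in>X. d x y = d y x) \<and>
     (\<forall>x\<in>X. \<forall>y\<in>X. \<forall>z\<in>X. d x y \<le> st (d x z) (d z y))"

definition sball :: "'a set \<Rightarrow> ('a \<Rightarrow> 'a \<Rightarrow> real) \<Rightarrow> 'a \<Rightarrow> real \<Rightarrow> 'a set" where
  "sball X d a r = {x\<in>X. d a x < r}"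

definition sopen :: "'a set \<Rightarrow> ('a \<Rightarrow> 'a \<Rightarrow> real) \<Rightarrow> 'a set \<Rightarrow> bool" where
  "sopen X d U \<longleftrightarrow> U \<subseteq> X \<and> (\<forall>a\<in>U. \<exists>r>0. sball X d a r \<subseteq> U)"

definition scountably_compact :: "'a set \<Rightarrow> ('a \<Rightarrow> 'a \<Rightarrow> real) \<Rightarrow> bool" where
  "scountably_compact X d \<longleftrightarrow>
     (\<forall>\<U>. countable \<U> \<and> (\<forall>U\<in>\<U>. sopen X d U) \<and> X \<subseteq> \<Union>\<U> \<longrightarrow>
        (\<exists>\<F>. \<F> \<subseteq> \<U> \<and> finite \<F> \<and> X \<subseteq> \<Union>\<F>))"

definition stotally_bounded :: "'a set \<Rightarrow> ('a \<Rightarrow> 'a \<Rightarrow> real) \<Rightarrow> bool" where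
  "stotally_bounded X d \<longleftrightarrow>
     (\<forall>\<epsilon>>0. \<exists>F. finite F \<and> F \<subseteq> X \<and> X = (\<Union>x\<in>F. sball X d x \<epsilon>))"

end

theory Submission
  imports Defs
begin

(* If X were not totally bounded, a greedy choice would produce an infinite sequence whose points
   are pairwise at distance at least \<epsilon>. Continuity of the t-definer at 0 gives an r > 0 with
   a \<star> b < \<epsilon> whenever a, b < r, so by the \<star>-triangle inequality every r-ball contains at
   most one point of the sequence. Hence the range of the sequence is closed, and the r-balls around
   its points together with its complement form a countable open cover without finite subcover. *)

lemma scountably_compactD:
  assumes "scountably_compact X d" "X \<subseteq> \<Union>\<U>" "\<And>U. U \<in> \<U> \<Longrightarrow> sopen X d U" "countable \<U>"
  shows "\<exists>\<F>\<subseteq>\<U>. finite \<F> \<and> X \<subseteq> \<Union>\<F>"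
  using assms unfolding scountably_compact_def by blast

lemma t_definerD:
  assumes "t_definer st"
  shows t_definer_commute_all: "\<forall>a\<ge>0. \<forall>b\<ge>0. st a b = st b a"
    and t_definer_mono_all: "\<forall>a\<ge>0. \<forall>b\<ge>0. \<forall>c\<ge>0. a \<le> b \<longrightarrow> st a c \<le> st b c"
    and t_definer_zero_all: "\<forall>a\<ge>0. st a 0 = a"
    and t_definer_continuous_all: "\<forall>b\<ge>0. continuous_on {0..} (\<lambda>a. st a b)"
  by (insert assms, unfold t_definer_def) (elim conjE, assumption)+

lemma t_definer_commute: "t_definer st \<Longrightarrow> 0 \<le> a \<Longrightarrow> 0 \<le> b \<Longrightarrow> st a b = st b a"
  using t_definer_commute_all by blast

lemma t_definer_mono_left:
  "t_definer st \<Longrightarrow> 0 \<le> a \<Longrightarrow> a \<le> b \<Longrightarrow> 0 \<le> c \<Longrightarrow> st a c \<le> st b c"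
  using t_definer_mono_all by (meson order_trans)

lemma t_definer_mono_right:
  assumes "t_definer st" "0 \<le> a" "0 \<le> b" "b \<le> c"
  shows "st a b \<le> st a c"
  using t_definer_mono_left[OF assms(1,3,4,2)] t_definer_commute[OF assms(1)] assms(2-4)
  by simp

lemma t_definer_zero_left: "t_definer st \<Longrightarrow> 0 \<le> a \<Longrightarrow> st 0 a = a"
  using t_definer_commute[of st 0 a] t_definer_zero_all by simp

lemma t_definer_less_near_zero:
  assumes "t_definer st" "0 \<le> b" "b < r"
  obtains \<delta> where "\<delta> > 0" "\<And>t. 0 \<le> t \<Longrightarrow> t < \<delta> \<Longrightarrow> st t b < r"
proof -
  have "st 0 b < r"
    using assms by (simp add: t_definer_zero_left)
  then obtain \<delta> where "\<delta> > 0" and \<delta>: "\<forall>t\<in>{0..}. dist t 0 < \<delta> \<longrightarrow> dist (st t b) (st 0 b) < r - st 0 b"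
    using t_definer_continuous_all[OF assms(1)] assms(2) unfolding continuous_on_iff
    by (metis atLeast_iff diff_gt_0_iff_gt order_refl)
  moreover have "st t b < r" if "0 \<le> t" "t < \<delta>" for t
    using \<delta> that by (auto simp: dist_real_def)
  ultimately show thesis
    using that by blast
qed

lemma t_definer_less_if_small:
  assumes "t_definer st" "\<epsilon> > 0"
  obtains r where "r > 0" "\<And>a b. 0 \<le> a \<Longrightarrow> a < r \<Longrightarrow> 0 \<le> b \<Longrightarrow> b < r \<Longrightarrow> st a b < \<epsilon>"
proof -
  obtain \<delta> where "\<delta> > 0" and \<delta>: "\<And>t. 0 \<le> t \<Longrightarrow> t < \<delta> \<Longrightarrow> st t (\<epsilon>/2) < \<epsilon>"
    using t_definer_less_near_zero[OF assms(1), of "\<epsilon>/2" \<epsilon>] assms(2) by auto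
  have "st a b < \<epsilon>" if "0 \<le> a" "a < min \<delta> (\<epsilon>/2)" "0 \<le> b" "b < min \<delta> (\<epsilon>/2)" for a b
  proof -
    have "st a b \<le> st a (\<epsilon>/2)"
      using that by (intro t_definer_mono_right[OF assms(1)]) auto
    also have "\<dots> < \<epsilon>"
      using that by (intro \<delta>) auto
    finally show ?thesis .
  qed
  then show thesis
    using that[of "min \<delta> (\<epsilon>/2)"] \<open>\<delta> > 0\<close> assms(2) by auto
qed

lemma greedy_sequence:
  assumes "\<And>F. finite F \<Longrightarrow> F \<subseteq> X \<Longrightarrow> \<exists>y\<in>X. \<forall>x\<in>F. R x y"
  obtains xs :: "nat \<Rightarrow> 'a" where "range xs \<subseteq> X" "\<And>i j. i < j \<Longrightarrow> R (xs i) (xs j)"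
proof -
  obtain g where g: "\<And>F. finite F \<Longrightarrow> F \<subseteq> X \<Longrightarrow> g F \<in> X \<and> (\<forall>x\<in>F. R x (g F))"
    using assms by metis
  define S where "S = rec_nat {} (\<lambda>_ F. insert (g F) F)"
  have S: "finite (S n) \<and> S n \<subseteq> X \<and> (\<forall>i<n. g (S i) \<in> S n)" for n
    by (induction n) (auto simp: S_def g less_Suc_eq)
  show thesis
  proof (rule that[of "\<lambda>n. g (S n)"])
    show "range (\<lambda>n. g (S n)) \<subseteq> X"
      using S g by blast
    show "R (g (S i)) (g (S j))" if "i < j" for i j
      using S g that by blast
  qed
qed

locale star_metric_space =
  fixes X :: "'a set" and st :: "real \<Rightarrow> real \<Rightarrow> real" and d :: "'a \<Rightarrow> 'a \<Rightarrow> real"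
  assumes t_definer: "t_definer st"
    and star_metric: "star_metric X st d"
begin

lemma nonneg: "x \<in> X \<Longrightarrow> y \<in> X \<Longrightarrow> 0 \<le> d x y"
  using star_metric unfolding star_metric_def by auto

lemma zero_iff: "x \<in> X \<Longrightarrow> y \<in> X \<Longrightarrow> d x y = 0 \<longleftrightarrow> x = y"
  using star_metric unfolding star_metric_def by simp

lemma commute: "x \<in> X \<Longrightarrow> y \<in> X \<Longrightarrow> d x y = d y x"
  using star_metric unfolding star_metric_def by auto

lemma triangle: "x \<in> X \<Longrightarrow> y \<in> X \<Longrightarrow> z \<in> X \<Longrightarrow> d x y \<le> st (d x z) (d z y)"
  using star_metric unfolding star_metric_def by auto

lemma centre_in_sball: "x \<in> X \<Longrightarrow> 0 < r \<Longrightarrow> x \<in> sball X d x r"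
  using zero_iff[of x x] by (simp add: sball_def)

lemma sopen_sball:
  assumes "y \<in> X"
  shows "sopen X d (sball X d y r)"
  unfolding sopen_def
proof (intro conjI ballI)
  show "sball X d y r \<subseteq> X"
    by (auto simp: sball_def)
  fix z assume "z \<in> sball X d y r"
  then have "z \<in> X" "0 \<le> d y z" "d y z < r"
    using assms nonneg by (auto simp: sball_def)
  then obtain \<delta> where "\<delta> > 0" and \<delta>: "\<And>t. 0 \<le> t \<Longrightarrow> t < \<delta> \<Longrightarrow> st t (d y z) < r"
    using t_definer_less_near_zero[OF t_definer] by metis
  have "w \<in> sball X d y r" if "w \<in> sball X d z \<delta>" for w
  proof -
    have "w \<in> X" "0 \<le> d z w" "d z w < \<delta>"
      using that \<open>z \<in> X\<close> nonneg by (auto simp: sball_def)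
    have "d y w \<le> st (d y z) (d z w)"
      using triangle assms \<open>z \<in> X\<close> \<open>w \<in> X\<close> by blast
    also have "\<dots> = st (d z w) (d y z)"
      using t_definer_commute[OF t_definer] \<open>0 \<le> d y z\<close> \<open>0 \<le> d z w\<close> by simp
    also have "\<dots> < r"
      using \<delta> \<open>0 \<le> d z w\<close> \<open>d z w < \<delta>\<close> by blast
    finally show ?thesis
      using \<open>w \<in> X\<close> by (simp add: sball_def)
  qed
  then show "\<exists>\<delta>>0. sball X d z \<delta> \<subseteq> sball X d y r"
    using \<open>\<delta> > 0\<close> by blast
qed

lemma separated_sequence_if_not_totally_bounded:
  assumes "\<not> stotally_bounded X d"
  obtains \<epsilon> and xs :: "nat \<Rightarrow> 'a" where "\<epsilon> > 0" "range xs \<subseteq> X" "\<And>i j. i \<noteq> j \<Longrightarrow> \<epsilon> \<le> d (xs i) (xs j)"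
proof -
  obtain \<epsilon> where "\<epsilon> > 0" and uncovered: "\<And>F. finite F \<Longrightarrow> F \<subseteq> X \<Longrightarrow> X \<noteq> (\<Union>x\<in>F. sball X d x \<epsilon>)"
    using assms unfolding stotally_bounded_def by force
  have extend: "\<exists>y\<in>X. \<forall>x\<in>F. \<epsilon> \<le> d x y" if "finite F" "F \<subseteq> X" for F
  proof -
    have "(\<Union>x\<in>F. sball X d x \<epsilon>) \<subseteq> X"
      by (auto simp: sball_def)
    with uncovered[OF that] obtain y where "y \<in> X" "y \<notin> (\<Union>x\<in>F. sball X d x \<epsilon>)"
      by blast
    then show ?thesis
      by (auto simp: sball_def not_less)
  qed
  obtain xs :: "nat \<Rightarrow> 'a" where xs: "range xs \<subseteq> X" and far: "\<And>i j. i < j \<Longrightarrow> \<epsilon> \<le> d (xs i) (xs j)"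
    using greedy_sequence[OF extend] by blast
  have "\<epsilon> \<le> d (xs i) (xs j)" if "i \<noteq> j" for i j
  proof -
    have "xs i \<in> X" "xs j \<in> X"
      using xs by auto
    from \<open>i \<noteq> j\<close> consider "i < j" | "j < i"
      by linarith
    then show ?thesis
    proof cases
      case 1
      then show ?thesis
        by (rule far)
    next
      case 2
      then show ?thesis
        using far[OF 2] commute[OF \<open>xs i \<in> X\<close> \<open>xs j \<in> X\<close>] by simp
    qed
  qed
  with \<open>\<epsilon> > 0\<close> xs show thesis
    by (rule that)
qed

context
  fixes \<epsilon> r :: real and xs :: "nat \<Rightarrow> 'a"
  assumes in_X: "range xs \<subseteq> X"
    and separated: "\<And>i j. i \<noteq> j \<Longrightarrow> \<epsilon> \<le> d (xs i) (xs j)"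
    and small: "\<And>a b. 0 \<le> a \<Longrightarrow> a < r \<Longrightarrow> 0 \<le> b \<Longrightarrow> b < r \<Longrightarrow> st a b < \<epsilon>"
    and "r > 0"
begin

lemma sball_contains_at_most_one:
  assumes "y \<in> X" "xs i \<in> sball X d y r" "xs j \<in> sball X d y r"
  shows "i = j"
proof (rule ccontr)
  assume "i \<noteq> j"
  have "xs i \<in> X" "xs j \<in> X"
    using in_X by auto
  have "d (xs i) y = d y (xs i)"
    using commute \<open>xs i \<in> X\<close> \<open>y \<in> X\<close> .
  then have "d (xs i) y < r" "d y (xs j) < r"
    using assms(2,3) by (simp_all add: sball_def)
  moreover have "0 \<le> d (xs i) y" "0 \<le> d y (xs j)"
    using nonneg \<open>xs i \<in> X\<close> \<open>xs j \<in> X\<close> \<open>y \<in> X\<close> by simp_all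
  ultimately have "st (d (xs i) y) (d y (xs j)) < \<epsilon>"
    using small by simp
  moreover have "d (xs i) (xs j) \<le> st (d (xs i) y) (d y (xs j))"
    using triangle \<open>xs i \<in> X\<close> \<open>xs j \<in> X\<close> \<open>y \<in> X\<close> .
  ultimately show False
    using separated[OF \<open>i \<noteq> j\<close>] by simp
qed

lemma sopen_complement_range: "sopen X d (X - range xs)"
  unfolding sopen_def
proof (intro conjI ballI)
  fix y assume y: "y \<in> X - range xs"
  show "\<exists>s>0. sball X d y s \<subseteq> X - range xs"
  proof (cases "\<exists>n. xs n \<in> sball X d y r")
    case False
    then show ?thesis
      using \<open>r > 0\<close> by (intro exI[of _ r]) (auto simp: sball_def)
  next
    case True
    then obtain n where n: "xs n \<in> sball X d y r" ..
    have "xs n \<in> X" "y \<noteq> xs n"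
      using in_X y by auto
    then have "0 < d y (xs n)"
      using y nonneg zero_iff by (metis DiffD1 order_le_less)
    moreover have "xs m \<notin> sball X d y (min r (d y (xs n)))" for m
    proof
      assume m: "xs m \<in> sball X d y (min r (d y (xs n)))"
      then have "xs m \<in> sball X d y r"
        by (simp add: sball_def)
      with n y have "m = n"
        using sball_contains_at_most_one by blast
      with m show False
        by (simp add: sball_def)
    qed
    ultimately show ?thesis
      using \<open>r > 0\<close> by (intro exI[of _ "min r (d y (xs n))"]) (auto simp: sball_def)
  qed
qed auto

lemma not_scountably_compact: "\<not> scountably_compact X d"
proof
  assume "scountably_compact X d"
  define balls where "balls = range (\<lambda>n. sball X d (xs n) r)"
  have xs_X: "xs n \<in> X" for n
    using in_X by blast
  have centre: "xs n \<in> sball X d (xs n) r" for n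
    using centre_in_sball[OF xs_X \<open>r > 0\<close>] .
  have "X \<subseteq> \<Union>(insert (X - range xs) balls)"
    using centre by (auto simp: balls_def)
  moreover have "\<And>U. U \<in> insert (X - range xs) balls \<Longrightarrow> sopen X d U"
    unfolding balls_def using sopen_complement_range xs_X by (auto intro: sopen_sball)
  moreover have "countable (insert (X - range xs) balls)"
    by (simp add: balls_def)
  ultimately obtain \<F> where \<F>: "\<F> \<subseteq> insert (X - range xs) balls" "finite \<F>" "X \<subseteq> \<Union>\<F>"
    using scountably_compactD[OF \<open>scountably_compact X d\<close>] by meson
  have "\<F> - {X - range xs} \<subseteq> (\<lambda>n. sball X d (xs n) r) ` UNIV"
    using \<F>(1) unfolding balls_def by blast
  moreover have "finite (\<F> - {X - range xs})"
    using \<open>finite \<F>\<close> by simp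
  ultimately obtain N where "finite N" and N: "\<F> - {X - range xs} = (\<lambda>n. sball X d (xs n) r) ` N"
    using finite_subset_image by metis
  obtain n where "n \<notin> N"
    using ex_new_if_finite[OF infinite_UNIV_nat \<open>finite N\<close>] ..
  obtain U where "U \<in> \<F>" "xs n \<in> U"
    using \<F>(3) xs_X by blast
  then have "U \<in> (\<lambda>n. sball X d (xs n) r) ` N"
    unfolding N[symmetric] by blast
  then obtain m where "m \<in> N" "xs n \<in> sball X d (xs m) r"
    using \<open>xs n \<in> U\<close> by blast
  then have "n = m"
    using sball_contains_at_most_one[OF xs_X _ centre] by blast
  with \<open>n \<notin> N\<close> \<open>m \<in> N\<close> show False
    by simp
qed

end

end

theorem corollary3p3:
  fixes X :: "'a set" and st :: "real \<Rightarrow> real \<Rightarrow> real" and d :: "'a \<Rightarrow> 'a \<Rightarrow> real"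
  assumes "X \<noteq> {}"
    and "t_definer st"
    and "star_metric X st d"
    and "scountably_compact X d"
  shows "stotally_bounded X d"
proof (rule ccontr)
  interpret star_metric_space X st d
    using assms(2,3) by unfold_locales
  assume "\<not> stotally_bounded X d"
  then obtain \<epsilon> and xs :: "nat \<Rightarrow> 'a"
    where "\<epsilon> > 0" and in_X: "range xs \<subseteq> X" and separated: "\<And>i j. i \<noteq> j \<Longrightarrow> \<epsilon> \<le> d (xs i) (xs j)"
    using separated_sequence_if_not_totally_bounded by blast
  obtain r where "r > 0" and small: "\<And>a b. 0 \<le> a \<Longrightarrow> a < r \<Longrightarrow> 0 \<le> b \<Longrightarrow> b < r \<Longrightarrow> st a b < \<epsilon>"
    using t_definer_less_if_small[OF assms(2) \<open>\<epsilon> > 0\<close>] by blast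
  have "\<not> scountably_compact X d"
    using not_scountably_compact[OF in_X separated small \<open>r > 0\<close>] .
  with assms(4) show False
    by contradiction
qed

end
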